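(* Let $L^x,L^y>0$, let $i\neq j$ be two boxes, each box $k\in\{i,j\}$ having center $(c^x_k,c^y_k)$, side lengths $(\ell^x_k,\ell^y_k)$ and constants $lb^s_k>0$. Let $Q^{obj}$ be the set of $(c_i,c_j,\ell_i,\ell_j,d^x_{i,j},d^y_{i,j})\in\mathbb{R}^{10}$ with $\tfrac12\ell^s_k\le c^s_k\le L^s-\tfrac12\ell^s_k$, $\ell^s_k\ge lb^s_k$ for all $s\in\{x,y\},k\in\{i,j\}$, and $d^s_{i,j}\ge c^s_i-c^s_j$, $d^s_{i,j}\ge c^s_j-c^s_i$ for $s\in\{x,y\}$. Let $E$ be the set of $(c,\ell,d,z)$ with $(c,\ell,d)\in Q^{obj}$, $z=(z^s_{p,q})_{s\in\{x,y\},(p,q)\in\{(i,j),(j,i)\}}\in\{0,1\}^4$ not identically zero, $z^s_{i,j}+z^s_{j,i}\le1$ for each $s$, $z^s_{p,q}=1\Rightarrow\mathscr{B}_p\leftarrow_s\mathscr{B}_q$, and $z^s_{i,j}=z^s_{j,i}=0\Rightarrow(\mathscr{B}_i\not\leftarrow_s\mathscr{B}_j$ and $\mathscr{B}_j\not\leftarrow_s\mathscr{B}_i)$. Then for every $s\in\{x,y\}$ and $\{p,q\}=\{i,j\}$, all points of $E$ satisfy \begin{align*} d^s_{i,j}&\ge\tfrac12(\ell^s_i+\ell^s_j)-L^s(1-z^s_{i,j}-z^s_{j,i}),\\ d^s_{i,j}&\ge c^s_p-c^s_q+\ell^s_p+lb^s_q(z^s_{p,q}+z^s_{q,p})-L^s(1-z^s_{p,q}),\\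 d^s_{i,j}&\ge c^s_p-c^s_q+(lb^s_p+lb^s_q)z^s_{p,q},\\ 2d^s_{i,j}&\ge\ell^s_p-L^s(1-z^s_{p,q}-z^s_{q,p})+lb^s_q(z^s_{p,q}+z^s_{q,p}). \end{align*}
   Context: $\mathscr{B}_p\leftarrow_s\mathscr{B}_q$ means $c^s_p+\tfrac12\ell^s_p\le c^s_q-\tfrac12\ell^s_q$, and $\mathscr{B}_p\not\leftarrow_s\mathscr{B}_q$ means $c^s_p+\tfrac12\ell^s_p\ge c^s_q-\tfrac12\ell^s_q$. $E$ is the paper's embedding $\operatorname{Em}(Q^{obj},D^8,C^8)$; the variables $d^s_{i,j}$ linearize the Manhattan-distance objective $|c^s_i-c^s_j|$. In the paper $lb^s_k=\beta_k/ub^s_k$ with $ub^s_k=\min\{\sqrt{\alpha_k\beta_k},L^s\}$. *)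

theory Defs
  imports Main "HOL.Real"
begin

datatype axis = X | Y

definition precedes :: "(axis \<Rightarrow> 'b \<Rightarrow> real) \<Rightarrow> (axis \<Rightarrow> 'b \<Rightarrow> real) \<Rightarrow> axis \<Rightarrow> 'b \<Rightarrow> 'b \<Rightarrow> bool" where
  "precedes c l s p q \<longleftrightarrow> c s p + l s p / 2 \<le> c s q - l s q / 2"

text \<open>The paper's "not precedes" relation (non-strict, as defined in the paper):
  c_p + l_p/2 >= c_q - l_q/2.\<close>
definition not_precedes :: "(axis \<Rightarrow> 'b \<Rightarrow> real) \<Rightarrow> (axis \<Rightarrow> 'b \<Rightarrow> real) \<Rightarrow> axis \<Rightarrow> 'b \<Rightarrow> 'b \<Rightarrow> bool" where
  "not_precedes c l s p q \<longleftrightarrow> c s p + l s p / 2 \<ge> c s q - l s q / 2"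

definition in_Qobj :: "(axis \<Rightarrow> real) \<Rightarrow> (axis \<Rightarrow> 'b \<Rightarrow> real) \<Rightarrow> 'b \<Rightarrow> 'b
    \<Rightarrow> (axis \<Rightarrow> 'b \<Rightarrow> real) \<Rightarrow> (axis \<Rightarrow> 'b \<Rightarrow> real) \<Rightarrow> (axis \<Rightarrow> real) \<Rightarrow> bool" where
  "in_Qobj L lb i j c l d \<longleftrightarrow>
     (\<forall>s. \<forall>k\<in>{i, j}. l s k / 2 \<le> c s k \<and> c s k \<le> L s - l s k / 2 \<and> l s k \<ge> lb s k) \<and>
     (\<forall>s. d s \<ge> c s i - c s j \<and> d s \<ge> c s j - c s i)"

definition in_E :: "(axis \<Rightarrow> real) \<Rightarrow> (axis \<Rightarrow> 'b \<Rightarrow> real) \<Rightarrow> 'b \<Rightarrow> 'b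
    \<Rightarrow> (axis \<Rightarrow> 'b \<Rightarrow> real) \<Rightarrow> (axis \<Rightarrow> 'b \<Rightarrow> real) \<Rightarrow> (axis \<Rightarrow> real)
    \<Rightarrow> (axis \<Rightarrow> 'b \<Rightarrow> 'b \<Rightarrow> real) \<Rightarrow> bool" where
  "in_E L lb i j c l d z \<longleftrightarrow>
     in_Qobj L lb i j c l d \<and>
     (\<forall>s. z s i j \<in> {0, 1} \<and> z s j i \<in> {0, 1}) \<and>
     \<not> (\<forall>s. z s i j = 0 \<and> z s j i = 0) \<and>
     (\<forall>s. z s i j + z s j i \<le> 1) \<and>
     (\<forall>s. (z s i j = 1 \<longrightarrow> precedes c l s i j) \<and> (z s j i = 1 \<longrightarrow> precedes c l s j i)) \<and>
     (\<forall>s. z s i j = 0 \<and> z s j i = 0 \<longrightarrow> not_precedes c l s i j \<and> not_precedes c l s j i)"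

end

theory Submission
  imports Defs
begin

text \<open>Along a fixed axis the four cuts only involve that axis' coordinates, and the
  hypotheses leave exactly three configurations: no ordering variable is set (the cuts
  then follow from the box bounds and the linearisation of the distance), or one box
  precedes the other (the distance is then at least the half-sum of the lengths).
  Each cut is linear once the configuration is fixed, and the cuts for the ordered
  pair (j, i) are those for (i, j) with the roles of the boxes exchanged.\<close>

lemma separation_cuts_one_axis:
  fixes ci cj li lj lbi lbj L d a b :: real
  assumes "li / 2 \<le> ci" "ci \<le> L - li / 2" "lbi \<le> li"
    and "lj / 2 \<le> cj" "cj \<le> L - lj / 2" "lbj \<le> lj"
    and "ci - cj \<le> d" "cj - ci \<le> d"
    and "a = 0 \<and> b = 0
       \<or> a = 1 \<and> b = 0 \<and> ci + li / 2 \<le> cj - lj / 2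
       \<or> a = 0 \<and> b = 1 \<and> cj + lj / 2 \<le> ci - li / 2"
  shows "(li + lj) / 2 - L * (1 - a - b) \<le> d \<and>
         ci - cj + li + lbj * (a + b) - L * (1 - a) \<le> d \<and>
         ci - cj + (lbi + lbj) * a \<le> d \<and>
         li - L * (1 - a - b) + lbj * (a + b) \<le> 2 * d"
  using assms(9) by (elim disjE conjE) (use assms(1-8) in \<open>simp add: field_simps; linarith\<close>)+

lemma in_Qobj_axis:
  assumes "in_Qobj L lb i j c l d"
  shows "l s i / 2 \<le> c s i" "c s i \<le> L s - l s i / 2" "lb s i \<le> l s i"
    and "l s j / 2 \<le> c s j" "c s j \<le> L s - l s j / 2" "lb s j \<le> l s j"
    and "c s i - c s j \<le> d s" "c s j - c s i \<le> d s"
  using assms unfolding in_Qobj_def by auto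

lemma in_E_axis_configurations:
  assumes "in_E L lb i j c l d z"
  shows "z s i j = 0 \<and> z s j i = 0
       \<or> z s i j = 1 \<and> z s j i = 0 \<and> c s i + l s i / 2 \<le> c s j - l s j / 2
       \<or> z s i j = 0 \<and> z s j i = 1 \<and> c s j + l s j / 2 \<le> c s i - l s i / 2"
proof -
  have "z s i j \<in> {0, 1}" "z s j i \<in> {0, 1}" "z s i j + z s j i \<le> 1"
    and "z s i j = 1 \<longrightarrow> precedes c l s i j" "z s j i = 1 \<longrightarrow> precedes c l s j i"
    using assms unfolding in_E_def by blast+
  then show ?thesis unfolding precedes_def by auto
qed

theorem proposition6p4:
  fixes L :: "axis \<Rightarrow> real" and lb c l :: "axis \<Rightarrow> 'b \<Rightarrow> real"
    and d :: "axis \<Rightarrow> real" and z :: "axis \<Rightarrow> 'b \<Rightarrow> 'b \<Rightarrow> real"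
    and i j :: 'b
  assumes "\<forall>s. L s > 0"
    and "i \<noteq> j"
    and "\<forall>s. \<forall>k\<in>{i, j}. lb s k > 0"
    and "in_E L lb i j c l d z"
  shows "\<forall>s p q. (p = i \<and> q = j \<or> p = j \<and> q = i) \<longrightarrow>
           d s \<ge> (l s i + l s j) / 2 - L s * (1 - z s i j - z s j i) \<and>
           d s \<ge> c s p - c s q + l s p + lb s q * (z s p q + z s q p) - L s * (1 - z s p q) \<and>
           d s \<ge> c s p - c s q + (lb s p + lb s q) * z s p q \<and>
           2 * d s \<ge> l s p - L s * (1 - z s p q - z s q p) + lb s q * (z s p q + z s q p)"
proof (intro allI impI)
  fix s p q
  assume "p = i \<and> q = j \<or> p = j \<and> q = i"
  moreover
  have Q: "in_Qobj L lb i j c l d"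
    using assms(4) unfolding in_E_def by blast
  note configurations = in_E_axis_configurations[OF assms(4), of s]
  have "z s j i = 0 \<and> z s i j = 0
      \<or> z s j i = 1 \<and> z s i j = 0 \<and> c s j + l s j / 2 \<le> c s i - l s i / 2
      \<or> z s j i = 0 \<and> z s i j = 1 \<and> c s i + l s i / 2 \<le> c s j - l s j / 2"
    using configurations by auto
  note cuts_ji = separation_cuts_one_axis[OF in_Qobj_axis(4-6,1-3,8,7)[OF Q] this]
  note cuts_ij = separation_cuts_one_axis[OF in_Qobj_axis[OF Q] configurations]
  ultimately show "d s \<ge> (l s i + l s j) / 2 - L s * (1 - z s i j - z s j i) \<and>
      d s \<ge> c s p - c s q + l s p + lb s q * (z s p q + z s q p) - L s * (1 - z s p q) \<and>
      d s \<ge> c s p - c s q + (lb s p + lb s q) * z s p q \<and>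
      2 * d s \<ge> l s p - L s * (1 - z s p q - z s q p) + lb s q * (z s p q + z s q p)"
    by (elim disjE conjE) (use cuts_ij cuts_ji in \<open>simp_all add: algebra_simps\<close>)
qed

end
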